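(* Every tree-cograph has no induced cycle of length more than four.
   Context: Tree-cographs are defined recursively: (1) every tree is a tree-cograph; (2) if $G$ is a tree-cograph then its complement $\bar G$ is a tree-cograph; (3) for $k\ge 2$, if $G_1,\dots,G_k$ are connected tree-cographs then their disjoint union is a tree-cograph. *)

theory Defs
  imports Main
begin

type_synonym 'a graph = "'a set \<times> 'a set set"

definition verts :: "'a graph \<Rightarrow> 'a set" where "verts G = fst G"
definition edges :: "'a graph \<Rightarrow> 'a set set" where "edges G = snd G"

definition wf_graph :: "'a graph \<Rightarrow> bool" where
  "wf_graph G \<longleftrightarrow> finite (verts G) \<and>
     (\<forall>e\<in>edges G. \<exists>u v. e = {u, v} \<and> u \<noteq> v \<and> u \<in> verts G \<and> v \<in> verts G)"

definition adj :: "'a graph \<Rightarrow> 'a \<Rightarrow> 'a \<Rightarrow> bool" where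
  "adj G u v \<longleftrightarrow> {u, v} \<in> edges G"

definition connected_graph :: "'a graph \<Rightarrow> bool" where
  "connected_graph G \<longleftrightarrow> verts G \<noteq> {} \<and>
     (\<forall>u\<in>verts G. \<forall>v\<in>verts G. (adj G)\<^sup>*\<^sup>* u v)"

definition is_cycle :: "'a graph \<Rightarrow> 'a list \<Rightarrow> bool" where
  "is_cycle G vs \<longleftrightarrow> length vs \<ge> 3 \<and> distinct vs \<and> set vs \<subseteq> verts G \<and>
     (\<forall>i<length vs. adj G (vs ! i) (vs ! ((i + 1) mod length vs)))"

definition is_induced_cycle :: "'a graph \<Rightarrow> 'a list \<Rightarrow> bool" where
  "is_induced_cycle G vs \<longleftrightarrow> is_cycle G vs \<and>
     (\<forall>i<length vs. \<forall>j<length vs. adj G (vs ! i) (vs ! j) \<longrightarrow>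
         j = (i + 1) mod length vs \<or> i = (j + 1) mod length vs)"

definition is_tree :: "'a graph \<Rightarrow> bool" where
  "is_tree G \<longleftrightarrow> wf_graph G \<and> connected_graph G \<and> (\<nexists>vs. is_cycle G vs)"

definition complement :: "'a graph \<Rightarrow> 'a graph" where
  "complement G = (verts G,
     {{u, v} | u v. u \<in> verts G \<and> v \<in> verts G \<and> u \<noteq> v \<and> {u, v} \<notin> edges G})"

definition disjoint_union :: "'a graph list \<Rightarrow> 'a graph" where
  "disjoint_union Gs = (\<Union>G\<in>set Gs. verts G, \<Union>G\<in>set Gs. edges G)"

inductive tree_cograph :: "'a graph \<Rightarrow> bool" where
  tree: "is_tree G \<Longrightarrow> tree_cograph G"
| compl: "tree_cograph G \<Longrightarrow> tree_cograph (complement G)"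
| union: "\<lbrakk> length Gs \<ge> 2;
            \<forall>G\<in>set Gs. tree_cograph G \<and> connected_graph G;
            \<forall>i<length Gs. \<forall>j<length Gs. i \<noteq> j \<longrightarrow> verts (Gs ! i) \<inter> verts (Gs ! j) = {} \<rbrakk>
          \<Longrightarrow> tree_cograph (disjoint_union Gs)"

end

theory Submission
  imports Defs
begin

text \<open>A hole is an induced cycle of length at least five, an antihole the complement
  of one. Both contain a cycle (an antihole \<open>v\<^sub>0 \<dots> v\<^sub>n\<^sub>-\<^sub>1\<close> contains the pentagon
  \<open>v\<^sub>0 v\<^sub>2 v\<^sub>4 v\<^sub>1 v\<^sub>3\<close>), so trees have neither. Complementation swaps holes and
  antiholes, and the vertex set of a hole or antihole induces a connected graph, so
  in a disjoint union it lies inside a single component. By induction on the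
  definition, tree-cographs have no holes and no antiholes.\<close>

definition cyclic_adjacent :: "nat \<Rightarrow> nat \<Rightarrow> nat \<Rightarrow> bool" where
  "cyclic_adjacent n i j \<longleftrightarrow> j = (i + 1) mod n \<or> i = (j + 1) mod n"

lemma cyclic_adjacent_iff:
  assumes "i < n" "j < n"
  shows "cyclic_adjacent n i j \<longleftrightarrow>
    j = i + 1 \<or> i = j + 1 \<or> (i = 0 \<and> j = n - 1) \<or> (j = 0 \<and> i = n - 1)"
proof -
  have "(k + 1) mod n = (if k + 1 = n then 0 else k + 1)" if "k < n" for k
    using that by auto
  then show ?thesis
    using assms unfolding cyclic_adjacent_def by auto
qed

text \<open>\<open>hole_or_antihole G vs True\<close>: \<open>vs\<close> induces a hole in \<open>G\<close>;
  \<open>hole_or_antihole G vs False\<close>: \<open>vs\<close> induces an antihole.\<close>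

definition hole_or_antihole :: "'a graph \<Rightarrow> 'a list \<Rightarrow> bool \<Rightarrow> bool" where
  "hole_or_antihole G vs b \<longleftrightarrow> length vs \<ge> 5 \<and> distinct vs \<and> set vs \<subseteq> verts G \<and>
    (\<forall>i<length vs. \<forall>j<length vs. i \<noteq> j \<longrightarrow>
       (adj G (vs ! i) (vs ! j) \<longleftrightarrow> cyclic_adjacent (length vs) i j = b))"

lemma hole_or_antihole_adj_iff:
  assumes "hole_or_antihole G vs b" "i < length vs" "j < length vs" "i \<noteq> j"
  shows "adj G (vs ! i) (vs ! j) \<longleftrightarrow> cyclic_adjacent (length vs) i j = b"
  using assms unfolding hole_or_antihole_def by blast

lemma adj_commute: "adj G u v \<longleftrightarrow> adj G v u"
  by (simp add: adj_def insert_commute)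

lemma wf_graph_adjD:
  assumes "wf_graph G" "adj G u v"
  shows "u \<in> verts G" "v \<in> verts G"
  using assms unfolding wf_graph_def adj_def by (auto simp: doubleton_eq_iff)

lemma is_induced_cycle_imp_hole:
  assumes "is_induced_cycle G vs" "length vs > 4"
  shows "hole_or_antihole G vs True"
proof -
  have cyc: "is_cycle G vs" and chordless:
    "\<And>i j. i < length vs \<Longrightarrow> j < length vs \<Longrightarrow> adj G (vs ! i) (vs ! j) \<Longrightarrow>
       cyclic_adjacent (length vs) i j"
    using assms(1) unfolding is_induced_cycle_def cyclic_adjacent_def by blast+
  have succ: "adj G (vs ! i) (vs ! ((i + 1) mod length vs))" if "i < length vs" for i
    using cyc that unfolding is_cycle_def by blast
  have "adj G (vs ! i) (vs ! j)" if "i < length vs" "j < length vs"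
    "cyclic_adjacent (length vs) i j" for i j
    using that(3) succ[OF that(1)] succ[OF that(2)] adj_commute[of G "vs ! j"]
    unfolding cyclic_adjacent_def by auto
  then have "adj G (vs ! i) (vs ! j) \<longleftrightarrow> cyclic_adjacent (length vs) i j"
    if "i < length vs" "j < length vs" for i j
    using that chordless by blast
  then show ?thesis
    using assms(2) cyc unfolding hole_or_antihole_def is_cycle_def by simp
qed

lemma hole_or_antihole_imp_cycle:
  assumes "hole_or_antihole G vs b"
  shows "\<exists>ws. is_cycle G ws"
proof -
  let ?n = "length vs"
  have n: "?n \<ge> 5" and d: "distinct vs" and s: "set vs \<subseteq> verts G"
    using assms unfolding hole_or_antihole_def by auto
  have adj: "adj G (vs ! i) (vs ! j) \<longleftrightarrow> cyclic_adjacent ?n i j = b"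
    if "i < ?n" "j < ?n" "i \<noteq> j" for i j
    using hole_or_antihole_adj_iff[OF assms that] .
  show ?thesis
  proof (cases b)
    case True
    have "adj G (vs ! i) (vs ! ((i + 1) mod ?n))" if "i < ?n" for i
    proof (rule adj[THEN iffD2])
      show "(i + 1) mod ?n < ?n" "i \<noteq> (i + 1) mod ?n"
        using that n by (auto simp: mod_if)
    qed (use that True in \<open>simp_all add: cyclic_adjacent_def\<close>)
    then have "is_cycle G vs"
      using n d s unfolding is_cycle_def by auto
    then show ?thesis by blast
  next
    case False
    let ?ws = "[vs ! 0, vs ! 2, vs ! 4, vs ! 1, vs ! 3]"
    have antiadj: "adj G (vs ! i) (vs ! j)"
      if "i < 5" "j < 5" "i \<noteq> j" "\<not> cyclic_adjacent 5 i j" for i j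
    proof -
      have "\<not> cyclic_adjacent ?n i j"
        using that n by (auto simp: cyclic_adjacent_iff)
      then show ?thesis using that n False adj[of i j] by simp
    qed
    have "adj G (?ws ! i) (?ws ! ((i + 1) mod 5))" if "i < 5" for i
    proof -
      from that consider "i = 0" | "i = 1" | "i = 2" | "i = 3" | "i = 4" by linarith
      then show ?thesis
        by cases (auto intro: antiadj simp: cyclic_adjacent_def)
    qed
    moreover have "distinct ?ws" "set ?ws \<subseteq> verts G"
    proof -
      have "0 < ?n" "1 < ?n" "2 < ?n" "3 < ?n" "4 < ?n" using n by auto
      then show "distinct ?ws" "set ?ws \<subseteq> verts G"
        using d s by (simp_all add: nth_eq_iff_index_eq subsetD)
    qed
    ultimately have "is_cycle G ?ws" unfolding is_cycle_def by simp
    then show ?thesis by blast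
  qed
qed

lemma hole_or_antihole_connected:
  assumes "hole_or_antihole G vs b" "vs ! 0 \<in> S"
    and closed: "\<And>i j. i < length vs \<Longrightarrow> j < length vs \<Longrightarrow> adj G (vs ! i) (vs ! j) \<Longrightarrow>
      vs ! j \<in> S \<Longrightarrow> vs ! i \<in> S"
  shows "set vs \<subseteq> S"
proof -
  let ?n = "length vs"
  have n: "?n \<ge> 5" using assms(1) unfolding hole_or_antihole_def by simp
  have adj: "adj G (vs ! i) (vs ! j) \<longleftrightarrow> cyclic_adjacent ?n i j = b"
    if "i < ?n" "j < ?n" "i \<noteq> j" for i j
    using hole_or_antihole_adj_iff[OF assms(1) that] .
  have "vs ! i \<in> S" if "i < ?n" for i
  proof (cases b)
    case True
    from that show ?thesis
    proof (induction i)
      case 0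
      show ?case using assms(2) .
    next
      case (Suc i)
      then have "adj G (vs ! Suc i) (vs ! i)"
        using True adj[of "Suc i" i] by (simp add: cyclic_adjacent_iff)
      then show ?case using Suc closed[of "Suc i" i] by simp
    qed
  next
    case False
    \<comment> \<open>in an antihole, \<open>v\<^sub>0\<close> sees \<open>v\<^sub>2 \<dots> v\<^sub>n\<^sub>-\<^sub>2\<close>, and \<open>v\<^sub>1\<close>, \<open>v\<^sub>n\<^sub>-\<^sub>1\<close> see \<open>v\<^sub>3\<close>, \<open>v\<^sub>2\<close>\<close>
    have reach: "vs ! i \<in> S"
      if "i < ?n" "j < ?n" "\<not> cyclic_adjacent ?n i j" "i \<noteq> j" "vs ! j \<in> S" for i j
      using that False adj[of i j] closed[of i j] by simp
    have mid: "vs ! k \<in> S" if "2 \<le> k" "k + 2 \<le> ?n" for k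
    proof -
      have "k < ?n" "0 < ?n" using that by auto
      then show ?thesis
        using that assms(2) by (intro reach[of k 0]) (auto simp: cyclic_adjacent_iff)
    qed
    have "vs ! 1 \<in> S"
      using n mid[of 3] by (intro reach[of 1 3]) (auto simp: cyclic_adjacent_iff)
    moreover have "vs ! (?n - 1) \<in> S"
      using n mid[of 2] by (intro reach[of "?n - 1" 2]) (auto simp: cyclic_adjacent_iff)
    moreover from that consider "i = 0" | "i = 1" | "i = ?n - 1" | "2 \<le> i \<and> i + 2 \<le> ?n"
      by linarith
    ultimately show ?thesis using assms(2) mid by cases auto
  qed
  then show ?thesis by (auto simp: in_set_conv_nth)
qed

lemma verts_complement [simp]: "verts (complement G) = verts G"
  by (simp add: complement_def verts_def)

lemma wf_graph_complement: "wf_graph G \<Longrightarrow> wf_graph (complement G)"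
  unfolding wf_graph_def complement_def verts_def edges_def by auto

lemma adj_complement_iff:
  assumes "u \<in> verts G" "v \<in> verts G" "u \<noteq> v"
  shows "adj (complement G) u v \<longleftrightarrow> \<not> adj G u v"
proof
  assume "adj (complement G) u v"
  then obtain x y where "{u, v} = {x, y}" "{x, y} \<notin> edges G"
    unfolding adj_def complement_def edges_def by auto
  then show "\<not> adj G u v" unfolding adj_def by simp
next
  assume "\<not> adj G u v"
  then show "adj (complement G) u v"
    using assms unfolding adj_def complement_def edges_def verts_def by auto
qed

lemma hole_or_antihole_complement:
  assumes "hole_or_antihole (complement G) vs b"
  shows "hole_or_antihole G vs (\<not> b)"
proof -
  have n: "length vs \<ge> 5" and d: "distinct vs" and s: "set vs \<subseteq> verts G"
    using assms unfolding hole_or_antihole_def by auto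
  have "adj G (vs ! i) (vs ! j) \<longleftrightarrow> cyclic_adjacent (length vs) i j = (\<not> b)"
    if "i < length vs" "j < length vs" "i \<noteq> j" for i j
  proof -
    have "vs ! i \<in> verts G" "vs ! j \<in> verts G" "vs ! i \<noteq> vs ! j"
      using that d s by (auto simp: nth_eq_iff_index_eq)
    then show ?thesis
      using hole_or_antihole_adj_iff[OF assms that] adj_complement_iff[of "vs ! i" G "vs ! j"]
      by auto
  qed
  then show ?thesis
    using n d s unfolding hole_or_antihole_def by blast
qed

lemma verts_disjoint_union: "verts (disjoint_union Gs) = (\<Union>G\<in>set Gs. verts G)"
  unfolding disjoint_union_def verts_def by simp

lemma adj_disjoint_union_iff: "adj (disjoint_union Gs) u v \<longleftrightarrow> (\<exists>G\<in>set Gs. adj G u v)"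
  unfolding adj_def disjoint_union_def edges_def by simp

lemma wf_graph_disjoint_union:
  "\<forall>G\<in>set Gs. wf_graph G \<Longrightarrow> wf_graph (disjoint_union Gs)"
  unfolding wf_graph_def disjoint_union_def verts_def edges_def by fastforce

lemma adj_disjoint_union_iff_component:
  assumes wf: "\<forall>G\<in>set Gs. wf_graph G"
    and disj: "\<forall>i<length Gs. \<forall>j<length Gs. i \<noteq> j \<longrightarrow> verts (Gs ! i) \<inter> verts (Gs ! j) = {}"
    and k: "k < length Gs" "u \<in> verts (Gs ! k)"
  shows "adj (disjoint_union Gs) u v \<longleftrightarrow> adj (Gs ! k) u v"
proof
  assume "adj (disjoint_union Gs) u v"
  then obtain G' where G': "G' \<in> set Gs" "adj G' u v"
    unfolding adj_disjoint_union_iff by blast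
  then obtain l where "l < length Gs" "G' = Gs ! l"
    by (metis in_set_conv_nth)
  with G' have l: "l < length Gs" "adj (Gs ! l) u v" by simp_all
  have "wf_graph (Gs ! l)" using wf l(1) by simp
  then have "u \<in> verts (Gs ! l)" using l(2) by (rule wf_graph_adjD)
  then have "verts (Gs ! l) \<inter> verts (Gs ! k) \<noteq> {}" using k(2) by blast
  then have "l = k" using disj k(1) l(1) by blast
  then show "adj (Gs ! k) u v" using l(2) by simp
next
  assume "adj (Gs ! k) u v"
  then show "adj (disjoint_union Gs) u v"
    unfolding adj_disjoint_union_iff using k(1) by (auto intro: nth_mem)
qed

lemma hole_or_antihole_disjoint_union:
  assumes wf: "\<forall>G\<in>set Gs. wf_graph G"
    and disj: "\<forall>i<length Gs. \<forall>j<length Gs. i \<noteq> j \<longrightarrow> verts (Gs ! i) \<inter> verts (Gs ! j) = {}"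
    and hole: "hole_or_antihole (disjoint_union Gs) vs b"
  shows "\<exists>G\<in>set Gs. hole_or_antihole G vs b"
proof -
  let ?U = "disjoint_union Gs"
  have n: "length vs \<ge> 5" and d: "distinct vs" and s: "set vs \<subseteq> verts ?U"
    using hole unfolding hole_or_antihole_def by auto
  have "0 < length vs" using n by linarith
  then have "vs ! 0 \<in> verts ?U" using s nth_mem[of 0 vs] by blast
  then obtain G0 where G0: "G0 \<in> set Gs" "vs ! 0 \<in> verts G0"
    unfolding verts_disjoint_union by blast
  then obtain k where "k < length Gs" "G0 = Gs ! k"
    by (metis in_set_conv_nth)
  with G0 have k: "k < length Gs" "vs ! 0 \<in> verts (Gs ! k)" by simp_all
  note adj_k = adj_disjoint_union_iff_component[OF wf disj k(1)]
  have "set vs \<subseteq> verts (Gs ! k)"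
  proof (rule hole_or_antihole_connected[OF hole k(2)])
    fix i j assume "adj ?U (vs ! i) (vs ! j)" "vs ! j \<in> verts (Gs ! k)"
    then have "adj (Gs ! k) (vs ! j) (vs ! i)"
      using adj_k[of "vs ! j" "vs ! i"] adj_commute[of ?U] by simp
    moreover have "wf_graph (Gs ! k)" using wf k(1) by simp
    ultimately show "vs ! i \<in> verts (Gs ! k)" by (intro wf_graph_adjD(2))
  qed
  moreover have "adj (Gs ! k) (vs ! i) (vs ! j) \<longleftrightarrow> cyclic_adjacent (length vs) i j = b"
    if "i < length vs" "j < length vs" "i \<noteq> j" for i j
  proof -
    have "vs ! i \<in> verts (Gs ! k)" using that(1) calculation nth_mem by blast
    then show ?thesis using hole_or_antihole_adj_iff[OF hole that] adj_k by simp
  qed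
  ultimately have "hole_or_antihole (Gs ! k) vs b"
    using n d unfolding hole_or_antihole_def by simp
  moreover have "Gs ! k \<in> set Gs" using k(1) by (rule nth_mem)
  ultimately show ?thesis by blast
qed

lemma tree_cograph_no_hole_or_antihole:
  "tree_cograph G \<Longrightarrow> wf_graph G \<and> (\<forall>vs b. \<not> hole_or_antihole G vs b)"
proof (induction rule: tree_cograph.induct)
  case (tree G)
  then have "wf_graph G" and acyclic: "\<nexists>ws. is_cycle G ws"
    unfolding is_tree_def by simp_all
  moreover have "\<not> hole_or_antihole G vs b" for vs b
    using acyclic hole_or_antihole_imp_cycle[of G vs b] by auto
  ultimately show ?case by simp
next
  case (compl G)
  have "\<not> hole_or_antihole (complement G) vs b" for vs b
    using compl.IH hole_or_antihole_complement[of G vs b] by auto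
  with compl.IH show ?case by (simp add: wf_graph_complement)
next
  case (union Gs)
  then have wf: "\<forall>G\<in>set Gs. wf_graph G" by simp
  have "\<not> hole_or_antihole (disjoint_union Gs) vs b" for vs b
    using hole_or_antihole_disjoint_union[OF wf union.hyps(2), of vs b] union.IH by auto
  then show ?case by (simp add: wf_graph_disjoint_union[OF wf])
qed

theorem lemma1:
  fixes G :: "'a graph"
  assumes "tree_cograph G"
  shows "\<not> (\<exists>vs. is_induced_cycle G vs \<and> length vs > 4)"
  using tree_cograph_no_hole_or_antihole[OF assms] is_induced_cycle_imp_hole[of G] by auto

end
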